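(* Assume the setup and monomial order in the context, with $b_{v;j,i}=\sum_{s=1}^n v_{j,r(s)}v^\dagger_{s,r(i)}-\delta_{j,i}1$. Every overlap ambiguity $(g_1,g_2,b_1,b_2)$ of $R$ with respect to $\le$ (i.e. $g_1,g_2\in R$ nonzero, $b_1,b_2$ monomials with $(b_1,b_2)\ne(1,1)$, $\mathrm{tip}(g_1)\,b_2=b_1\,\mathrm{tip}(g_2)$, $\mathrm{tip}(g_2)$ does not divide $b_2$ and $\mathrm{tip}(g_1)$ does not divide $b_1$) is of the form $$(b_{v^\dagger;\ell,1},\ b_{v;1,i},\ v^\dagger_{\ell,n},\ v^\dagger_{1,r(i)})$$ for some $v\in M$ and $(\ell,i)\in[n]^2$. Moreover every overlap ambiguity resolves, i.e. there are reductions $\varphi_1,\varphi_2$ by $R$ with $\varphi_1((\mathrm{tip}(g_1)-g_1/\lambda_1)b_2)=\varphi_2(b_1(\mathrm{tip}(g_2)-g_2/\lambda_2))$, $\lambda_m$ the coefficient of $\mathrm{tip}(g_m)$ in $g_m$.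
   Context: Let $k$ be a field and $n\ge 2$ an integer; write $[n]=\{1,\dots,n\}$ and $r(i)=n+1-i$. Let $X=\{u_{j,i},u^*_{j,i}:(j,i)\in[n]^2\}$ be a set of $2n^2$ distinct symbols and let $*$ be the involution of $X$ exchanging $u_{j,i}$ and $u^*_{j,i}$. Let $k\langle X\rangle$ be the free unital $k$-algebra on $X$. For an $n\times n$ matrix $v=(v_{j,i})$ with entries in $X$ define $n\times n$ matrices $v^t,v^\star,v^\dagger$ with entries in $X$ by $v^t_{j,i}=v_{i,j}$, $v^\star_{j,i}=(v_{r(j),r(i)})^*$, $v^\dagger_{j,i}=(v_{r(i),r(j)})^*$. Let $u=(u_{j,i})$ and $M=\{u,u^t,u^\star,u^\dagger\}$, and $R=\{\sum_{s=1}^n v_{j,r(s)}v^\dagger_{s,r(i)}-\delta_{j,i}1: v\in M,(j,i)\in[n]^2\}$. Monomial order: let $\le$ be the total order on $X$ with $u^*_{t,s}<u_{j,i}$ for all indices, $u_{t,s}<u_{j,i}$ iff $(t,s)<(j,i)$ lexicographically, and $u^*_{t,s}<u^*_{j,i}$ iff $(j,i)<(t,s)$ lexicographically; extend degree-lexicographically to monomials. $\mathrm{tip}(p)$ is the $\le$-largest monomial with nonzero coefficient in $p\ne0$. A one-step reduction by $0\ne p$ is a linear endomorphism of $k\langle X\rangle$ which, for some fixed monomials $a,c$, sends $a\,\mathrm{tip}(p)\,c$ to $a(\mathrm{tip}(p)-p/\lambda_p)c$ ($\lambda_p$ the coefficient of $\mathrm{tip}(p)$ in $p$) and fixes all other monomials;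 a reduction by $R$ is a finite composite of one-step reductions by nonzero elements of $R$. *)

theory Defs
  imports Main "HOL-Library.Poly_Mapping"
begin

text \<open>Symbols: U j i stands for u_{j,i}, S j i stands for u*_{j,i}.\<close>
datatype sym = U nat nat | S nat nat

definition Xset :: "nat \<Rightarrow> sym set" where
  "Xset n = {U j i | j i. j \<in> {1..n} \<and> i \<in> {1..n}} \<union> {S j i | j i. j \<in> {1..n} \<and> i \<in> {1..n}}"

fun sstar :: "sym \<Rightarrow> sym" where
  "sstar (U j i) = S j i"
| "sstar (S j i) = U j i"

definition rr :: "nat \<Rightarrow> nat \<Rightarrow> nat" where
  "rr n i = n + 1 - i"

text \<open>Matrices with entries in X are functions of (row, column).\<close>
type_synonym smat = "nat \<Rightarrow> nat \<Rightarrow> sym"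

definition umat :: smat where "umat = (\<lambda>j i. U j i)"
definition mtr :: "smat \<Rightarrow> smat" where "mtr v = (\<lambda>j i. v i j)"
definition mstar :: "nat \<Rightarrow> smat \<Rightarrow> smat" where
  "mstar n v = (\<lambda>j i. sstar (v (rr n j) (rr n i)))"
definition mdag :: "nat \<Rightarrow> smat \<Rightarrow> smat" where
  "mdag n v = (\<lambda>j i. sstar (v (rr n i) (rr n j)))"

definition Mset :: "nat \<Rightarrow> smat set" where
  "Mset n = {umat, mtr umat, mstar n umat, mdag n umat}"

text \<open>Free unital algebra k<X>: finitely supported functions on words.\<close>
type_synonym 'k fa = "sym list \<Rightarrow>\<^sub>0 'k"

definition mon :: "sym list \<Rightarrow> 'k::field fa" where
  "mon w = Poly_Mapping.single w 1"

definition fmul :: "'k::field fa \<Rightarrow> 'k fa \<Rightarrow> 'k fa" where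
  "fmul f g = (\<Sum>x\<in>Poly_Mapping.keys f. \<Sum>y\<in>Poly_Mapping.keys g. Poly_Mapping.single (x @ y) (Poly_Mapping.lookup f x * Poly_Mapping.lookup g y))"

definition smul :: "'k::field \<Rightarrow> 'k fa \<Rightarrow> 'k fa" where
  "smul c f = Poly_Mapping.map (\<lambda>x. c * x) f"

definition bgen :: "nat \<Rightarrow> smat \<Rightarrow> nat \<Rightarrow> nat \<Rightarrow> 'k::field fa" where
  "bgen n v j i = (\<Sum>s\<in>{1..n}. mon [v j (rr n s), mdag n v s (rr n i)])
                   - (if j = i then mon [] else 0)"

definition Rset :: "nat \<Rightarrow> 'k::field fa set" where
  "Rset n = {bgen n v j i | v j i. v \<in> Mset n \<and> j \<in> {1..n} \<and> i \<in> {1..n}}"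

fun sym_less :: "sym \<Rightarrow> sym \<Rightarrow> bool" where
  "sym_less (S t s) (U j i) = True"
| "sym_less (U t s) (S j i) = False"
| "sym_less (U t s) (U j i) = (t < j \<or> (t = j \<and> s < i))"
| "sym_less (S t s) (S j i) = (j < t \<or> (j = t \<and> i < s))"

definition mon_less :: "sym list \<Rightarrow> sym list \<Rightarrow> bool" where
  "mon_less a b \<longleftrightarrow> length a < length b \<or>
     (length a = length b \<and> (a, b) \<in> lexord {(x, y). sym_less x y})"

definition tip :: "'k::field fa \<Rightarrow> sym list" where
  "tip p = (THE m. m \<in> Poly_Mapping.keys p \<and> (\<forall>m'\<in>Poly_Mapping.keys p. m' = m \<or> mon_less m' m))"

definition lcoef :: "'k::field fa \<Rightarrow> 'k" where
  "lcoef p = Poly_Mapping.lookup p (tip p)"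

text \<open>One-step reduction by p at (a, c): the linear map sending the monomial
  a tip(p) c to a (tip(p) - p/lambda_p) c and fixing all other monomials.\<close>
definition red1 :: "'k::field fa \<Rightarrow> sym list \<Rightarrow> sym list \<Rightarrow> 'k fa \<Rightarrow> 'k fa" where
  "red1 p a c f = f - smul (Poly_Mapping.lookup f (a @ tip p @ c) / lcoef p) (fmul (fmul (mon a) p) (mon c))"

inductive reduction :: "nat \<Rightarrow> ('k::field fa \<Rightarrow> 'k fa) \<Rightarrow> bool" for n where
  red_id: "reduction n id"
| red_step: "reduction n \<phi> \<Longrightarrow> p \<in> Rset n \<Longrightarrow> p \<noteq> 0 \<Longrightarrow> a \<in> lists (Xset n) \<Longrightarrow>
     c \<in> lists (Xset n) \<Longrightarrow> reduction n (red1 p a c \<circ> \<phi>)"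

definition divides_word :: "sym list \<Rightarrow> sym list \<Rightarrow> bool" where
  "divides_word w m \<longleftrightarrow> (\<exists>a c. m = a @ w @ c)"

definition overlap_amb :: "nat \<Rightarrow> 'k::field fa \<Rightarrow> 'k fa \<Rightarrow> sym list \<Rightarrow> sym list \<Rightarrow> bool" where
  "overlap_amb n g1 g2 b1 b2 \<longleftrightarrow>
     g1 \<in> Rset n \<and> g2 \<in> Rset n \<and> g1 \<noteq> 0 \<and> g2 \<noteq> 0 \<and>
     b1 \<in> lists (Xset n) \<and> b2 \<in> lists (Xset n) \<and> (b1, b2) \<noteq> ([], []) \<and>
     tip g1 @ b2 = b1 @ tip g2 \<and>
     \<not> divides_word (tip g2) b2 \<and> \<not> divides_word (tip g1) b1"

end

theory Submission
  imports Defs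
begin

text \<open>
  Every generator \<open>b(v; j, i)\<close> has tip \<open>v(j, n) v\<^sup>\<dagger>(1, r i)\<close> with coefficient 1, because every
  matrix of \<open>M\<close> is injective on \<open>[n]\<^sup>2\<close> and its last column holds the largest letter of each
  row. Two such tips can overlap only in one letter, and the shared letter
  \<open>w\<^sup>\<dagger>(1, r i') = w(i', n)\<^sup>*\<close> equals a last-column letter \<open>v(j, n)\<close> only if \<open>i' = j = 1\<close> and
  \<open>w = v\<^sup>\<dagger>\<close>.

  Write \<open>W = tip(g\<^sub>1) b\<^sub>2 = b\<^sub>1 tip(g\<^sub>2)\<close>. Besides \<open>W\<close>, each side of the ambiguity contains
  \<open>n - 1\<close> further tips, one for each \<open>s \<ge> 2\<close>; reducing each of them once leaves \<open>W - g\<^sub>1 b\<^sub>2 - b\<^sub>1 g\<^sub>2\<close> plus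
  \<open>\<Sum>\<^sub>s v\<^sup>\<dagger>(l, r s) b(v; s, i)\<close> on one side and \<open>\<Sum>\<^sub>s b(v\<^sup>\<dagger>; l, s) v\<^sup>\<dagger>(s, r i)\<close> on the
  other. The two sums agree, as both expand to
  \<open>\<Sum>\<^sub>s\<^sub>,\<^sub>t v\<^sup>\<dagger>(l, r s) v(s, r t) v\<^sup>\<dagger>(t, r i) - v\<^sup>\<dagger>(l, r i)\<close>.
\<close>

lemma lookup_smul [simp]: "Poly_Mapping.lookup (smul c f) x = c * Poly_Mapping.lookup f x"
  unfolding smul_def by (simp add: Poly_Mapping.map.rep_eq when_def)

lemma smul_one [simp]: "smul 1 f = f"
  by (rule poly_mapping_eqI) simp

lemma smul_minus_one: "smul (-1) f = - f"
  by (rule poly_mapping_eqI) simp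

lemma lookup_mon: "Poly_Mapping.lookup (mon w) m = (if w = m then 1 else 0)"
  by (simp add: mon_def lookup_single when_def)

lemma fmul_eq_sum_superset:
  assumes "finite K" "Poly_Mapping.keys f \<subseteq> K" "finite L" "Poly_Mapping.keys g \<subseteq> L"
  shows "fmul f g = (\<Sum>x\<in>K. \<Sum>y\<in>L.
           Poly_Mapping.single (x @ y) (Poly_Mapping.lookup f x * Poly_Mapping.lookup g y))"
proof -
  have "fmul f g = (\<Sum>x\<in>K. \<Sum>y\<in>Poly_Mapping.keys g.
          Poly_Mapping.single (x @ y) (Poly_Mapping.lookup f x * Poly_Mapping.lookup g y))"
    unfolding fmul_def by (rule sum.mono_neutral_left) (use assms in \<open>auto simp: in_keys_iff\<close>)
  also have "\<dots> = (\<Sum>x\<in>K. \<Sum>y\<in>L.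
          Poly_Mapping.single (x @ y) (Poly_Mapping.lookup f x * Poly_Mapping.lookup g y))"
    by (intro sum.cong refl sum.mono_neutral_left) (use assms in \<open>auto simp: in_keys_iff\<close>)
  finally show ?thesis .
qed

lemma fmul_add_left: "fmul (f + g) h = fmul f h + fmul g h"
proof -
  let ?K = "Poly_Mapping.keys f \<union> Poly_Mapping.keys g" and ?L = "Poly_Mapping.keys h"
  have "Poly_Mapping.keys (f + g) \<subseteq> ?K" by (rule keys_add)
  then show ?thesis
    by (simp add: fmul_eq_sum_superset[of ?K _ ?L] lookup_add distrib_right single_add sum.distrib)
qed

lemma fmul_add_right: "fmul h (f + g) = fmul h f + fmul h g"
proof -
  let ?K = "Poly_Mapping.keys h" and ?L = "Poly_Mapping.keys f \<union> Poly_Mapping.keys g"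
  have "Poly_Mapping.keys (f + g) \<subseteq> ?L" by (rule keys_add)
  then show ?thesis
    by (simp add: fmul_eq_sum_superset[of ?K _ ?L] lookup_add distrib_left single_add sum.distrib)
qed

lemma fmul_diff_left: "fmul (f - g) h = fmul f h - fmul g h"
  by (metis add_diff_cancel diff_add_cancel fmul_add_left)

lemma fmul_diff_right: "fmul h (f - g) = fmul h f - fmul h g"
  by (metis add_diff_cancel diff_add_cancel fmul_add_right)

lemma fmul_zero_left [simp]: "fmul 0 h = 0"
  by (simp add: fmul_def)

lemma fmul_zero_right [simp]: "fmul h 0 = 0"
  by (simp add: fmul_def)

lemma fmul_sum_left: "fmul (\<Sum>s\<in>A. F s) h = (\<Sum>s\<in>A. fmul (F s) h)"
  by (induction A rule: infinite_finite_induct) (auto simp: fmul_add_left)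

lemma fmul_sum_right: "fmul h (\<Sum>s\<in>A. F s) = (\<Sum>s\<in>A. fmul h (F s))"
  by (induction A rule: infinite_finite_induct) (auto simp: fmul_add_right)

lemma fmul_mon_mon [simp]: "fmul (mon a) (mon b) = (mon (a @ b) :: 'k::field fa)"
  unfolding mon_def fmul_def by simp

lemma lookup_fmul_mon_left:
  "Poly_Mapping.lookup (fmul (mon a) p) m =
     (\<Sum>y\<in>Poly_Mapping.keys p. if a @ y = m then Poly_Mapping.lookup p y else 0)"
  by (simp add: fmul_def mon_def lookup_sum lookup_single when_def)

lemma lookup_fmul_mon_right:
  "Poly_Mapping.lookup (fmul p (mon c)) m =
     (\<Sum>x\<in>Poly_Mapping.keys p. if x @ c = m then Poly_Mapping.lookup p x else 0)"
  by (simp add: fmul_def mon_def lookup_sum lookup_single when_def)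

lemma lookup_fmul_mon_append: "Poly_Mapping.lookup (fmul (mon a) p) (a @ w) = Poly_Mapping.lookup p w"
  by (simp add: lookup_fmul_mon_left if_distrib in_keys_iff)

lemma lookup_fmul_append_mon: "Poly_Mapping.lookup (fmul p (mon c)) (w @ c) = Poly_Mapping.lookup p w"
  by (simp add: lookup_fmul_mon_right if_distrib in_keys_iff)

lemma lookup_fmul_mon_not_prefix:
  "(\<And>w. m \<noteq> a @ w) \<Longrightarrow> Poly_Mapping.lookup (fmul (mon a) p) m = 0"
  unfolding lookup_fmul_mon_left by (rule sum.neutral) auto

lemma lookup_fmul_mon_not_suffix:
  "(\<And>w. m \<noteq> w @ c) \<Longrightarrow> Poly_Mapping.lookup (fmul p (mon c)) m = 0"
  unfolding lookup_fmul_mon_right by (rule sum.neutral) auto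

lemma fmul_mon_Nil_left [simp]: "fmul (mon []) f = f"
  by (rule poly_mapping_eqI) (metis append_Nil lookup_fmul_mon_append)

lemma fmul_mon_Nil_right [simp]: "fmul f (mon []) = f"
  by (rule poly_mapping_eqI) (metis append_Nil2 lookup_fmul_append_mon)

lemma sym_less_asym: "sym_less x y \<Longrightarrow> \<not> sym_less y x"
  by (cases x; cases y) auto

lemma mon_less_asym:
  assumes "mon_less a b"
  shows "\<not> mon_less b a"
proof
  let ?R = "{(x, y). sym_less x y}"
  assume "mon_less b a"
  have "asym ?R"
    by (rule asymI) (simp add: sym_less_asym)
  have ab: "length a < length b \<or> length a = length b \<and> (a, b) \<in> lexord ?R"
    using assms unfolding mon_less_def .
  have ba: "length b < length a \<or> length b = length a \<and> (b, a) \<in> lexord ?R"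
    using \<open>mon_less b a\<close> unfolding mon_less_def .
  show False
  proof (cases "length a = length b")
    case True
    then show False using ab ba lexord_asymmetric[OF \<open>asym ?R\<close>, of a b] by linarith
  next
    case False
    then show False using ab ba by linarith
  qed
qed

lemma tip_eqI:
  assumes key: "m \<in> Poly_Mapping.keys p"
    and max: "\<And>m'. m' \<in> Poly_Mapping.keys p \<Longrightarrow> m' \<noteq> m \<Longrightarrow> mon_less m' m"
  shows "tip p = m"
  unfolding tip_def
proof (rule the_equality)
  show "m \<in> Poly_Mapping.keys p \<and> (\<forall>m'\<in>Poly_Mapping.keys p. m' = m \<or> mon_less m' m)"
    using key max by blast
next
  fix m' assume m': "m' \<in> Poly_Mapping.keys p \<and> (\<forall>m''\<in>Poly_Mapping.keys p. m'' = m' \<or> mon_less m'' m')"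
  show "m' = m"
  proof (rule ccontr)
    assume ne: "m' \<noteq> m"
    have "mon_less m' m" using max m' ne by simp
    moreover have "mon_less m m'" using m' key ne by auto
    ultimately show False using mon_less_asym by auto
  qed
qed

lemma rr_range: "a \<in> {1..n} \<Longrightarrow> rr n a \<in> {1..n}"
  by (auto simp: rr_def)

lemma rr_inj: "a \<in> {1..n} \<Longrightarrow> b \<in> {1..n} \<Longrightarrow> rr n a = rr n b \<Longrightarrow> a = b"
  by (auto simp: rr_def)

lemma rr_rr: "a \<in> {1..n} \<Longrightarrow> rr n (rr n a) = a"
  by (auto simp: rr_def)

lemma rr_Suc_0 [simp]: "rr n (Suc 0) = n"
  by (simp add: rr_def)

definition admissible :: "nat \<Rightarrow> smat \<Rightarrow> bool" where
  "admissible n w \<longleftrightarrow>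
     (\<forall>a\<in>{1..n}. \<forall>b\<in>{1..n}. \<forall>c\<in>{1..n}. \<forall>d\<in>{1..n}. w a b = w c d \<longrightarrow> a = c \<and> b = d) \<and>
     (\<forall>j\<in>{1..n}. \<forall>b\<in>{1..n}. b < n \<longrightarrow> sym_less (w j b) (w j n))"

lemma admissible_inj:
  "admissible n w \<Longrightarrow> a \<in> {1..n} \<Longrightarrow> b \<in> {1..n} \<Longrightarrow> c \<in> {1..n} \<Longrightarrow> d \<in> {1..n} \<Longrightarrow>
     w a b = w c d \<Longrightarrow> a = c \<and> b = d"
  unfolding admissible_def by blast

lemma admissible_last_column_max:
  "admissible n w \<Longrightarrow> j \<in> {1..n} \<Longrightarrow> b \<in> {1..n} \<Longrightarrow> b < n \<Longrightarrow> sym_less (w j b) (w j n)"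
  unfolding admissible_def by blast

lemma lookup_bgen:
  assumes w: "admissible n w" and j: "j \<in> {1..n}"
  shows "Poly_Mapping.lookup (bgen n w j i :: 'k::field fa) m =
     (if m \<in> (\<lambda>s. [w j (rr n s), mdag n w s (rr n i)]) ` {1..n} then 1 else 0)
       - (if j = i \<and> m = [] then 1 else 0)"
proof -
  let ?F = "\<lambda>s. [w j (rr n s), mdag n w s (rr n i)]"
  have "inj_on ?F {1..n}"
  proof (rule inj_onI)
    fix x y assume xy: "x \<in> {1..n}" "y \<in> {1..n}" "?F x = ?F y"
    then have "rr n x = rr n y"
      using admissible_inj[OF w j rr_range[OF xy(1)] j rr_range[OF xy(2)]] by simp
    then show "x = y" using rr_inj xy by blast
  qed
  have "(\<Sum>s\<in>{1..n}. if ?F s = m then 1 else 0) = (\<Sum>y\<in>?F ` {1..n}. if y = m then 1 else (0::'k))"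
    by (simp only: sum.reindex[OF \<open>inj_on ?F {1..n}\<close>] comp_def)
  also have "\<dots> = (if m \<in> ?F ` {1..n} then 1 else 0)"
    by (simp add: sum.delta')
  finally have "(\<Sum>s\<in>{1..n}. if ?F s = m then 1 else 0) = (if m \<in> ?F ` {1..n} then 1 else (0::'k))" .
  then show ?thesis
    by (simp add: bgen_def lookup_minus lookup_sum lookup_mon)
qed

lemma lookup_bgen_term:
  assumes "admissible n w" "j \<in> {1..n}" "s \<in> {1..n}"
  shows "Poly_Mapping.lookup (bgen n w j i :: 'k::field fa) [w j (rr n s), mdag n w s (rr n i)] = 1"
  using assms by (simp add: lookup_bgen)

lemma
  assumes w: "admissible n w" and j: "j \<in> {1..n}"
  shows tip_bgen: "tip (bgen n w j i :: 'k::field fa) = [w j n, mdag n w 1 (rr n i)]"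
    and lcoef_bgen: "lcoef (bgen n w j i :: 'k::field fa) = 1"
proof -
  let ?F = "\<lambda>s. [w j (rr n s), mdag n w s (rr n i)]"
  have one: "1 \<in> {1..n}" using j by simp
  have "Poly_Mapping.lookup (bgen n w j i :: 'k fa) (?F 1) = 1"
    by (rule lookup_bgen_term[OF w j one])
  then have key: "?F 1 \<in> Poly_Mapping.keys (bgen n w j i :: 'k fa)"
    by (simp add: in_keys_iff)
  have "mon_less m (?F 1)" if "m \<in> Poly_Mapping.keys (bgen n w j i :: 'k fa)" "m \<noteq> ?F 1" for m
  proof -
    have "m \<in> ?F ` {1..n} \<or> m = []"
      using that(1) lookup_bgen[OF w j, of i m] by (auto simp: in_keys_iff split: if_splits)
    then show ?thesis
    proof
      assume "m \<in> ?F ` {1..n}"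
      then obtain s where s: "s \<in> {1..n}" "m = ?F s" by blast
      with that(2) have "s \<noteq> 1" by auto
      with s have "rr n s < n" "rr n s \<in> {1..n}" by (auto simp: rr_def)
      then have "sym_less (w j (rr n s)) (w j n)" using admissible_last_column_max[OF w j] by blast
      then show ?thesis using s by (simp add: mon_less_def)
    qed (simp add: mon_less_def)
  qed
  then have "tip (bgen n w j i :: 'k fa) = ?F 1"
    by (intro tip_eqI[OF key])
  then show tip: "tip (bgen n w j i :: 'k fa) = [w j n, mdag n w 1 (rr n i)]"
    by simp
  show "lcoef (bgen n w j i :: 'k fa) = 1"
    using lookup_bgen_term[OF w j one] by (simp add: lcoef_def tip)
qed

lemma bgen_nonzero: "admissible n w \<Longrightarrow> j \<in> {1..n} \<Longrightarrow> (bgen n w j i :: 'k::field fa) \<noteq> 0"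
  using lcoef_bgen[of n w j i] by (metis lcoef_def lookup_zero zero_neq_one)

lemma fmul_mon_bgen:
  "fmul (mon a) (bgen n w j i :: 'k::field fa) =
    (\<Sum>s\<in>{1..n}. mon (a @ [w j (rr n s), mdag n w s (rr n i)])) - (if j = i then mon a else 0)"
  unfolding bgen_def fmul_diff_right fmul_sum_right by (simp add: if_distrib[of "fmul (mon a)"])

lemma fmul_bgen_mon:
  "fmul (bgen n w j i :: 'k::field fa) (mon c) =
    (\<Sum>s\<in>{1..n}. mon ([w j (rr n s), mdag n w s (rr n i)] @ c)) - (if j = i then mon c else 0)"
  unfolding bgen_def fmul_diff_left fmul_sum_left by (simp add: if_distrib[of "\<lambda>x. fmul x (mon c)"])

lemma sstar_sstar [simp]: "sstar (sstar x) = x"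
  by (cases x) auto

lemma mdag_mdag: "a \<in> {1..n} \<Longrightarrow> b \<in> {1..n} \<Longrightarrow> mdag n (mdag n v) a b = v a b"
  by (simp add: mdag_def rr_rr)

lemma Mset_cases: "v \<in> Mset n \<Longrightarrow> v = umat \<or> v = mtr umat \<or> v = mstar n umat \<or> v = mdag n umat"
  by (auto simp: Mset_def)

lemma Mset_admissible:
  assumes "v \<in> Mset n"
  shows "admissible n v"
  using Mset_cases[OF assms]
  by (elim disjE) (auto simp: admissible_def umat_def mtr_def mstar_def mdag_def rr_def)

lemma admissible_cong:
  assumes w: "admissible n w" and eq: "\<forall>a\<in>{1..n}. \<forall>b\<in>{1..n}. w a b = w' a b"
  shows "admissible n w'"
  unfolding admissible_def
proof (rule conjI; intro ballI impI)
  fix a b c d assume r: "a \<in> {1..n}" "b \<in> {1..n}" "c \<in> {1..n}" "d \<in> {1..n}" and "w' a b = w' c d"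
  then have "w a b = w c d" using eq by simp
  then show "a = c \<and> b = d" using admissible_inj[OF w r] by blast
next
  fix j b assume r: "j \<in> {1..n}" "b \<in> {1..n}" "b < n"
  then have "w j b = w' j b" "w j n = w' j n" using eq by auto
  then show "sym_less (w' j b) (w' j n)" using admissible_last_column_max[OF w r] by simp
qed

text \<open>The dagger of a matrix of \<open>M\<close> is again in \<open>M\<close>, but only as far as its entries in
  \<open>[n]\<^sup>2\<close> are concerned, since matrices are total functions on \<open>nat\<close>.\<close>
lemma mdag_Mset:
  assumes "v \<in> Mset n"
  obtains v' where "v' \<in> Mset n" "\<forall>a\<in>{1..n}. \<forall>b\<in>{1..n}. mdag n v a b = v' a b"
proof -
  have "\<forall>a\<in>{1..n}. \<forall>b\<in>{1..n}. mdag n (mtr umat) a b = mstar n umat a b"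
    "\<forall>a\<in>{1..n}. \<forall>b\<in>{1..n}. mdag n (mstar n umat) a b = mtr umat a b"
    "\<forall>a\<in>{1..n}. \<forall>b\<in>{1..n}. mdag n (mdag n umat) a b = umat a b"
    by (simp_all add: mdag_def mtr_def mstar_def umat_def rr_rr)
  moreover have "umat \<in> Mset n" "mtr umat \<in> Mset n" "mstar n umat \<in> Mset n" "mdag n umat \<in> Mset n"
    by (simp_all add: Mset_def)
  ultimately show ?thesis
    using Mset_cases[OF assms] that by blast
qed

lemma mdag_Mset_admissible: "v \<in> Mset n \<Longrightarrow> admissible n (mdag n v)"
  by (metis mdag_Mset Mset_admissible admissible_cong)

lemma Mset_entry_in_Xset: "v \<in> Mset n \<Longrightarrow> a \<in> {1..n} \<Longrightarrow> b \<in> {1..n} \<Longrightarrow> v a b \<in> Xset n"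
  by (auto simp: Mset_def Xset_def umat_def mtr_def mstar_def mdag_def rr_def)

lemma mdag_Mset_entry_in_Xset:
  "v \<in> Mset n \<Longrightarrow> a \<in> {1..n} \<Longrightarrow> b \<in> {1..n} \<Longrightarrow> mdag n v a b \<in> Xset n"
  by (metis mdag_Mset Mset_entry_in_Xset)

lemma bgen_cong:
  assumes "\<forall>a\<in>{1..n}. \<forall>b\<in>{1..n}. w a b = w' a b" "j \<in> {1..n}" "i \<in> {1..n}"
  shows "(bgen n w j i :: 'k::field fa) = bgen n w' j i"
proof -
  have "w j (rr n s) = w' j (rr n s) \<and> mdag n w s (rr n i) = mdag n w' s (rr n i)" if "s \<in> {1..n}" for s
    using assms rr_range[OF that] by (simp add: mdag_def rr_rr)
  then show ?thesis
    unfolding bgen_def by (metis (no_types, lifting) sum.cong)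
qed

lemma bgen_mdag_in_Rset:
  assumes "v \<in> Mset n" "j \<in> {1..n}" "i \<in> {1..n}"
  shows "(bgen n (mdag n v) j i :: 'k::field fa) \<in> Rset n"
proof -
  obtain v' where "v' \<in> Mset n" "\<forall>a\<in>{1..n}. \<forall>b\<in>{1..n}. mdag n v a b = v' a b"
    using mdag_Mset[OF assms(1)] .
  then show ?thesis
    using bgen_cong[of n "mdag n v" v' j i] assms(2,3) unfolding Rset_def by blast
qed

lemma overlap_words:
  assumes "[x, y] @ b2 = b1 @ [z, t]" "(b1, b2) \<noteq> ([], [])" "\<not> divides_word [x, y] b1"
  shows "b1 = [x] \<and> b2 = [t] \<and> y = z"
proof (cases b1)
  case Nil
  then show ?thesis using assms by (cases b2) auto
next
  case (Cons a r)
  show ?thesis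
  proof (cases r)
    case Nil
    then show ?thesis using assms Cons by auto
  next
    case (Cons b r')
    have "b1 = [] @ [x, y] @ r'" using assms(1) \<open>b1 = a # r\<close> Cons by auto
    then show ?thesis using assms(3) unfolding divides_word_def by blast
  qed
qed

lemma Mset_overlap:
  assumes v: "v \<in> Mset n" and w: "w \<in> Mset n" and i: "i \<in> {1..n}" and j: "j \<in> {1..n}"
    and n: "n \<ge> 2" and eq: "mdag n w 1 (rr n i) = v j n"
  shows "i = 1 \<and> j = 1 \<and> (\<forall>a\<in>{1..n}. \<forall>b\<in>{1..n}. w a b = mdag n v a b)"
proof -
  have "i = 1 \<and> j = 1 \<and> (v = mdag n umat \<and> w = umat \<or> v = mstar n umat \<and> w = mtr umat
     \<or> v = mtr umat \<and> w = mstar n umat \<or> v = umat \<and> w = mdag n umat)"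
    using Mset_cases[OF v] Mset_cases[OF w] eq i j n
    by (elim disjE) (simp_all add: umat_def mtr_def mstar_def mdag_def rr_def, linarith+)
  then show ?thesis
    by (auto simp: mdag_mdag simp del: One_nat_def) (auto simp: umat_def mtr_def mstar_def mdag_def rr_rr)
qed

lemma overlap_amb_shape:
  assumes n: "n \<ge> 2" and amb: "overlap_amb n g1 g2 b1 b2"
  shows "\<exists>v\<in>Mset n. \<exists>l\<in>{1..n}. \<exists>i\<in>{1..n}.
           g1 = bgen n (mdag n v) l 1 \<and> g2 = bgen n v 1 i \<and>
           b1 = [mdag n v l n] \<and> b2 = [mdag n v 1 (rr n i)]"
proof -
  note amb = amb[unfolded overlap_amb_def]
  obtain w l i' where w: "w \<in> Mset n" "l \<in> {1..n}" "i' \<in> {1..n}" "g1 = bgen n w l i'"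
    using amb unfolding Rset_def by blast
  obtain v j i where v: "v \<in> Mset n" "j \<in> {1..n}" "i \<in> {1..n}" "g2 = bgen n v j i"
    using amb unfolding Rset_def by blast
  have "tip g1 = [w l n, mdag n w 1 (rr n i')]" "tip g2 = [v j n, mdag n v 1 (rr n i)]"
    using tip_bgen[OF Mset_admissible[OF w(1)] w(2)] tip_bgen[OF Mset_admissible[OF v(1)] v(2)]
      w(4) v(4) by simp_all
  then have words: "b1 = [w l n] \<and> b2 = [mdag n v 1 (rr n i)] \<and> mdag n w 1 (rr n i') = v j n"
    using amb by (intro overlap_words) auto
  then have "i' = 1 \<and> j = 1 \<and> (\<forall>a\<in>{1..n}. \<forall>b\<in>{1..n}. w a b = mdag n v a b)"
    using Mset_overlap[OF v(1) w(1) w(3) v(2) n] by blast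
  moreover have "n \<in> {1..n}" using n by simp
  ultimately have "g1 = bgen n (mdag n v) l 1" "g2 = bgen n v 1 i" "b1 = [mdag n v l n]"
    using w v words bgen_cong[of n w "mdag n v" l 1] by auto
  then show ?thesis using v(1,3) w(2) words by blast
qed

lemma reduction_sum:
  fixes f :: "'k::field fa"
  assumes "finite J"
    and "\<And>s. s \<in> J \<Longrightarrow> p s \<in> Rset n \<and> p s \<noteq> 0 \<and> lcoef (p s) = 1 \<and>
                a s \<in> lists (Xset n) \<and> c s \<in> lists (Xset n)"
    and "\<And>s. s \<in> J \<Longrightarrow> Poly_Mapping.lookup f (a s @ tip (p s) @ c s) = -1"
    and "\<And>s s'. s \<in> J \<Longrightarrow> s' \<in> J \<Longrightarrow> s' \<noteq> s \<Longrightarrow>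
       Poly_Mapping.lookup (fmul (fmul (mon (a s')) (p s')) (mon (c s'))) (a s @ tip (p s) @ c s) = 0"
  shows "\<exists>\<phi>. reduction n \<phi> \<and> \<phi> f = f + (\<Sum>s\<in>J. fmul (fmul (mon (a s)) (p s)) (mon (c s)))"
  using assms
proof (induction J rule: finite_induct)
  case empty
  show ?case using red_id[of n] by auto
next
  case (insert x J)
  let ?q = "\<lambda>s. fmul (fmul (mon (a s)) (p s)) (mon (c s))"
  let ?m = "a x @ tip (p x) @ c x"
  have "\<exists>\<phi>. reduction n \<phi> \<and> \<phi> f = f + (\<Sum>s\<in>J. ?q s)"
  proof (rule insert.IH)
    fix s assume "s \<in> J"
    then show "p s \<in> Rset n \<and> p s \<noteq> 0 \<and> lcoef (p s) = 1 \<and> a s \<in> lists (Xset n) \<and> c s \<in> lists (Xset n)"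
      by (intro insert.prems(1) insertI2)
  next
    fix s assume "s \<in> J"
    then show "Poly_Mapping.lookup f (a s @ tip (p s) @ c s) = -1"
      by (intro insert.prems(2) insertI2)
  next
    fix s s' assume "s \<in> J" "s' \<in> J" "s' \<noteq> s"
    then show "Poly_Mapping.lookup (?q s') (a s @ tip (p s) @ c s) = 0"
      by (intro insert.prems(3) insertI2)
  qed
  then obtain \<phi> where \<phi>: "reduction n \<phi>" "\<phi> f = f + (\<Sum>s\<in>J. ?q s)"
    by blast
  have x: "p x \<in> Rset n" "p x \<noteq> 0" "lcoef (p x) = 1" "a x \<in> lists (Xset n)" "c x \<in> lists (Xset n)"
    using insert.prems(1)[OF insertI1] by simp_all
  have "(\<Sum>s\<in>J. Poly_Mapping.lookup (?q s) ?m) = 0"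
  proof (rule sum.neutral, rule ballI)
    fix s assume "s \<in> J"
    moreover have "x \<notin> J" by (rule insert.hyps(2))
    ultimately show "Poly_Mapping.lookup (?q s) ?m = 0"
      by (intro insert.prems(3)) auto
  qed
  then have "Poly_Mapping.lookup (\<phi> f) ?m = -1"
    using insert.prems(2)[OF insertI1] by (simp add: \<phi>(2) lookup_add lookup_sum)
  then have "(red1 (p x) (a x) (c x) \<circ> \<phi>) f = \<phi> f + ?q x"
    by (simp add: red1_def x(3) smul_minus_one)
  also have "\<dots> = f + (\<Sum>s\<in>insert x J. ?q s)"
    using insert.hyps by (simp add: \<phi>(2) algebra_simps)
  finally show ?case using red_step[OF \<phi>(1) x(1,2,4,5)] by blast
qed

lemma sum_mon_bgen_eq_sum_bgen_mon:
  assumes l: "l \<in> {1..n}" and i: "i \<in> {1..n}"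
  shows "(\<Sum>s\<in>{1..n}. fmul (mon [mdag n v l (rr n s)]) (bgen n v s i) :: 'k::field fa)
       = (\<Sum>s\<in>{1..n}. fmul (bgen n (mdag n v) l s) (mon [mdag n v s (rr n i)]))"
proof -
  let ?D = "mdag n v"
  have "(\<Sum>s\<in>{1..n}. fmul (mon [?D l (rr n s)]) (bgen n v s i) :: 'k fa)
      = (\<Sum>s\<in>{1..n}. \<Sum>t\<in>{1..n}. mon [?D l (rr n s), v s (rr n t), ?D t (rr n i)]) - mon [?D l (rr n i)]"
    using i by (simp add: fmul_mon_bgen sum_subtractf)
  also have "\<dots> = (\<Sum>s\<in>{1..n}. \<Sum>t\<in>{1..n}. mon [?D l (rr n t), v t (rr n s), ?D s (rr n i)])
      - mon [?D l (rr n i)]"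
    by (subst sum.swap) (rule refl)
  also have "\<dots> = (\<Sum>s\<in>{1..n}. \<Sum>t\<in>{1..n}. mon [?D l (rr n t), mdag n ?D t (rr n s), ?D s (rr n i)])
      - mon [?D l (rr n i)]"
    by (intro arg_cong2[where f = "(-)"] sum.cong refl) (metis mdag_mdag rr_range)
  also have "\<dots> = (\<Sum>s\<in>{1..n}. fmul (bgen n ?D l s) (mon [?D s (rr n i)]))"
    using l by (simp add: fmul_bgen_mon sum_subtractf)
  finally show ?thesis .
qed

lemma reduce_overlap_left:
  assumes v: "v \<in> Mset n" and l: "l \<in> {1..n}" and i: "i \<in> {1..n}"
  defines "f \<equiv> mon [mdag n v l n, v 1 n, mdag n v 1 (rr n i)]
                  - fmul (bgen n (mdag n v) l 1) (mon [mdag n v 1 (rr n i)]) :: 'k::field fa"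
  shows "\<exists>\<phi>. reduction n \<phi> \<and> \<phi> f = f + (\<Sum>s\<in>{2..n}. fmul (mon [mdag n v l (rr n s)]) (bgen n v s i))"
proof -
  let ?D = "mdag n v"
  have D: "admissible n ?D" and va: "admissible n v"
    using v by (simp_all add: mdag_Mset_admissible Mset_admissible)
  have nn: "n \<in> {1..n}" using l by simp
  have "\<exists>\<phi>. reduction n \<phi> \<and>
          \<phi> f = f + (\<Sum>s\<in>{2..n}. fmul (fmul (mon [?D l (rr n s)]) (bgen n v s i)) (mon []))"
  proof (rule reduction_sum)
    fix s assume "s \<in> {2..n}"
    then have s: "s \<in> {1..n}" by simp
    show "bgen n v s i \<in> Rset n \<and> bgen n v s i \<noteq> 0 \<and> lcoef (bgen n v s i :: 'k fa) = 1 \<and>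
        [?D l (rr n s)] \<in> lists (Xset n) \<and> [] \<in> lists (Xset n)"
      using v s i bgen_nonzero[OF va s] lcoef_bgen[OF va s] mdag_Mset_entry_in_Xset[OF v l rr_range[OF s]]
      unfolding Rset_def by auto
  next
    fix s assume "s \<in> {2..n}"
    then have s: "s \<in> {1..n}" and "rr n s \<noteq> n" by (auto simp: rr_def)
    then have first: "?D l (rr n s) \<noteq> ?D l n"
      using admissible_inj[OF D l rr_range[OF s] l nn] by blast
    have target: "[?D l (rr n s)] @ tip (bgen n v s i :: 'k fa) @ []
        = [?D l (rr n s), mdag n ?D s (rr n 1)] @ [?D 1 (rr n i)]"
      using tip_bgen[OF va s] mdag_mdag[OF s nn] by simp
    show "Poly_Mapping.lookup f ([?D l (rr n s)] @ tip (bgen n v s i :: 'k fa) @ []) = -1"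
      unfolding f_def target lookup_minus lookup_fmul_append_mon lookup_bgen_term[OF D l s]
      using first by (simp add: lookup_mon)
  next
    fix s s' assume "s \<in> {2..n}" "s' \<in> {2..n}" and ne: "s' \<noteq> s"
    then have s: "s \<in> {1..n}" and s': "s' \<in> {1..n}" by simp_all
    have "?D l (rr n s') \<noteq> ?D l (rr n s)"
      using admissible_inj[OF D l rr_range[OF s'] l rr_range[OF s]] rr_inj[OF s' s] ne by blast
    then show "Poly_Mapping.lookup (fmul (fmul (mon [?D l (rr n s')]) (bgen n v s' i :: 'k fa)) (mon []))
        ([?D l (rr n s)] @ tip (bgen n v s i :: 'k fa) @ []) = 0"
      by (simp add: lookup_fmul_mon_not_prefix)
  qed simp
  then show ?thesis by simp
qed

lemma reduce_overlap_right:
  assumes v: "v \<in> Mset n" and l: "l \<in> {1..n}" and i: "i \<in> {1..n}"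
  defines "f \<equiv> mon [mdag n v l n, v 1 n, mdag n v 1 (rr n i)]
                  - fmul (mon [mdag n v l n]) (bgen n v 1 i) :: 'k::field fa"
  shows "\<exists>\<phi>. reduction n \<phi> \<and>
           \<phi> f = f + (\<Sum>s\<in>{2..n}. fmul (bgen n (mdag n v) l s) (mon [mdag n v s (rr n i)]))"
proof -
  let ?D = "mdag n v"
  have D: "admissible n ?D" and va: "admissible n v"
    using v by (simp_all add: mdag_Mset_admissible Mset_admissible)
  have one: "1 \<in> {1..n}" and nn: "n \<in> {1..n}" using l by simp_all
  have "\<exists>\<phi>. reduction n \<phi> \<and>
          \<phi> f = f + (\<Sum>s\<in>{2..n}. fmul (fmul (mon []) (bgen n ?D l s)) (mon [?D s (rr n i)]))"
  proof (rule reduction_sum)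
    fix s assume "s \<in> {2..n}"
    then have s: "s \<in> {1..n}" by simp
    show "bgen n ?D l s \<in> Rset n \<and> bgen n ?D l s \<noteq> 0 \<and> lcoef (bgen n ?D l s :: 'k fa) = 1 \<and>
        [] \<in> lists (Xset n) \<and> [?D s (rr n i)] \<in> lists (Xset n)"
      using bgen_mdag_in_Rset[OF v l s] bgen_nonzero[OF D l] lcoef_bgen[OF D l]
        mdag_Mset_entry_in_Xset[OF v s rr_range[OF i]] by auto
  next
    fix s assume "s \<in> {2..n}"
    then have s: "s \<in> {1..n}" and "rr n s \<noteq> n" by (auto simp: rr_def)
    then have second: "v 1 (rr n s) \<noteq> v 1 n"
      using admissible_inj[OF va one rr_range[OF s] one nn] by blast
    have target: "[] @ tip (bgen n ?D l s :: 'k fa) @ [?D s (rr n i)]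
        = [?D l n] @ [v 1 (rr n s), mdag n v s (rr n i)]"
      using tip_bgen[OF D l, of s, where 'k = 'k] mdag_mdag[OF one rr_range[OF s], of v] by simp
    show "Poly_Mapping.lookup f ([] @ tip (bgen n ?D l s :: 'k fa) @ [?D s (rr n i)]) = -1"
      unfolding f_def target lookup_minus lookup_fmul_mon_append lookup_bgen_term[OF va one s]
      using second by (simp add: lookup_mon)
  next
    fix s s' assume "s \<in> {2..n}" "s' \<in> {2..n}" "s' \<noteq> s"
    then have "?D s' (rr n i) \<noteq> ?D s (rr n i)"
      using admissible_inj[OF D _ rr_range[OF i] _ rr_range[OF i], of s' s] by auto
    then show "Poly_Mapping.lookup (fmul (fmul (mon []) (bgen n ?D l s' :: 'k fa)) (mon [?D s' (rr n i)]))
        ([] @ tip (bgen n ?D l s :: 'k fa) @ [?D s (rr n i)]) = 0"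
      by (intro lookup_fmul_mon_not_suffix) simp
  qed simp
  then show ?thesis by simp
qed

lemma overlap_resolves:
  assumes v: "v \<in> Mset n" and l: "l \<in> {1..n}" and i: "i \<in> {1..n}"
  defines "g1 \<equiv> bgen n (mdag n v) l 1 :: 'k::field fa" and "g2 \<equiv> bgen n v 1 i :: 'k fa"
    and "b1 \<equiv> [mdag n v l n]" and "b2 \<equiv> [mdag n v 1 (rr n i)]"
  shows "\<exists>\<phi>1 \<phi>2. reduction n \<phi>1 \<and> reduction n \<phi>2 \<and>
           \<phi>1 (fmul (mon (tip g1) - smul (1 / lcoef g1) g1) (mon b2))
             = \<phi>2 (fmul (mon b1) (mon (tip g2) - smul (1 / lcoef g2) g2))"
proof -
  let ?D = "mdag n v"
  let ?W = "[?D l n, v 1 n, ?D 1 (rr n i)]"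
  have D: "admissible n ?D" and va: "admissible n v"
    using v by (simp_all add: mdag_Mset_admissible Mset_admissible)
  have one: "1 \<in> {1..n}" and nn: "n \<in> {1..n}" using l by simp_all
  have "tip g1 = [?D l n, v 1 n]" "lcoef g1 = 1"
    using tip_bgen[OF D l, of 1, where 'k = 'k] lcoef_bgen[OF D l, of 1, where 'k = 'k]
      mdag_mdag[OF one nn, of v] by (simp_all add: g1_def)
  then have lhs: "fmul (mon (tip g1) - smul (1 / lcoef g1) g1) (mon b2) = mon ?W - fmul g1 (mon b2)"
    by (simp add: fmul_diff_left b2_def)
  have "tip g2 = [v 1 n, ?D 1 (rr n i)]" "lcoef g2 = 1"
    using tip_bgen[OF va one, of i] lcoef_bgen[OF va one, of i] by (simp_all add: g2_def)
  then have rhs: "fmul (mon b1) (mon (tip g2) - smul (1 / lcoef g2) g2) = mon ?W - fmul (mon b1) g2"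
    by (simp add: fmul_diff_right b1_def)
  obtain \<phi>1 where \<phi>1: "reduction n \<phi>1"
    "\<phi>1 (mon ?W - fmul g1 (mon b2)) = mon ?W - fmul g1 (mon b2)
        + (\<Sum>s\<in>{2..n}. fmul (mon [?D l (rr n s)]) (bgen n v s i))"
    using reduce_overlap_left[OF v l i, where 'k = 'k] unfolding g1_def b2_def by blast
  obtain \<phi>2 where \<phi>2: "reduction n \<phi>2"
    "\<phi>2 (mon ?W - fmul (mon b1) g2) = mon ?W - fmul (mon b1) g2
        + (\<Sum>s\<in>{2..n}. fmul (bgen n ?D l s) (mon [?D s (rr n i)]))"
    using reduce_overlap_right[OF v l i, where 'k = 'k] unfolding g2_def b1_def by blast
  have "{1..n} = insert 1 {2..n}" using l by auto
  then have "fmul (mon b1) g2 + (\<Sum>s\<in>{2..n}. fmul (mon [?D l (rr n s)]) (bgen n v s i))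
      = fmul g1 (mon b2) + (\<Sum>s\<in>{2..n}. fmul (bgen n ?D l s) (mon [?D s (rr n i)]))"
    using sum_mon_bgen_eq_sum_bgen_mon[OF l i, of v, where 'k = 'k]
    by (simp add: g1_def g2_def b1_def b2_def)
  then have "\<phi>1 (mon ?W - fmul g1 (mon b2)) = \<phi>2 (mon ?W - fmul (mon b1) g2)"
    unfolding \<phi>1(2) \<phi>2(2) by (simp add: algebra_simps)
  then show ?thesis
    unfolding lhs rhs using \<phi>1(1) \<phi>2(1) by blast
qed

theorem lemma3p6:
  fixes n :: nat and g1 g2 :: "'k::field fa" and b1 b2 :: "sym list"
  assumes "n \<ge> 2"
    and "overlap_amb n g1 g2 b1 b2"
  shows "(\<exists>v\<in>Mset n. \<exists>l\<in>{1..n}. \<exists>i\<in>{1..n}.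
            g1 = bgen n (mdag n v) l 1 \<and> g2 = bgen n v 1 i \<and>
            b1 = [mdag n v l n] \<and> b2 = [mdag n v 1 (rr n i)])
       \<and> (\<exists>\<phi>1 \<phi>2. reduction n \<phi>1 \<and> reduction n \<phi>2 \<and>
            \<phi>1 (fmul (mon (tip g1) - smul (1 / lcoef g1) g1) (mon b2))
              = \<phi>2 (fmul (mon b1) (mon (tip g2) - smul (1 / lcoef g2) g2)))"
proof -
  note shape = overlap_amb_shape[OF assms]
  then obtain v l i where vli: "v \<in> Mset n" "l \<in> {1..n}" "i \<in> {1..n}"
    and "g1 = bgen n (mdag n v) l 1" "g2 = bgen n v 1 i" "b1 = [mdag n v l n]" "b2 = [mdag n v 1 (rr n i)]"
    by blast
  then show ?thesis
    using shape overlap_resolves[OF vli] by simp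
qed

end
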